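(* Let $2^{t-1}<n\le 2^t-4$, $i=2^t-3-n$, $j=n-2^{t-1}+1$. Define $D_n=q_ip_n+q_{i+1}p_{n-1}+w_3q_{i-1}p_{n-2}$ and $A_n=r_{j-1}p_n+w_3r_{j-2}p_{n-1}+r_jp_{n-2}$ in $W_1$, and denote also by $A_n,D_n$ their images in ${\rm H}^*(\operatorname{Gr}_3(n);\mathbb{F}_2)$. Then $A_n,D_n$ lie in $K$, are homogeneous of degrees $\deg A_n=3n-2^t-1$ and $\deg D_n=2^t-4$, and the map sending the free generators $A,D$ to $A_n,D_n$ induces an isomorphism of graded $C$-modules \[ K\cong C\langle A,D\rangle\big/\big(q_iA+r_{j-1}D,\ q_{i+1}A+w_3r_{j-2}D,\ w_3q_{i-1}A+r_jD\big), \] the three relations having degrees $2n-4$, $2n-3$, $2n-2$.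
   Context: $W_1=\mathbb{F}_2[w_1,w_2,w_3]$ and $W_2=\mathbb{F}_2[w_2,w_3]$, graded by $\deg w_i=i$. $Q_m\in W_1$: $Q_0=1$, $Q_m=0$ for $m<0$, $Q_m=w_1Q_{m-1}+w_2Q_{m-2}+w_3Q_{m-3}$ for $m\ge1$; ${\rm H}^*(\operatorname{Gr}_3(n);\mathbb{F}_2)=W_1/(Q_{n-2},Q_{n-1},Q_n)$ with $w_i$ the Stiefel–Whitney classes of the tautological bundle. $q_m=Q_m|_{w_1=0}\in W_2$ (so $q_0=1$, $q_{m<0}=0$, $q_m=w_2q_{m-2}+w_3q_{m-3}$ for $m\ge1$); $r_0=1$, $r_{m<0}=0$, $r_{m+1}=w_2r_m+w_3^2r_{m-2}$. Viewing $q_m\in W_1$, $Q_m-q_m$ is divisible by $w_1$ and $p_m:=(Q_m-q_m)/w_1\in W_1$ (homogeneous of degree $m-1$). $C={\rm H}^*(\operatorname{Gr}_3(n);\mathbb{F}_2)/(w_1)=W_2/(q_{n-2},q_{n-1},q_n)$ and $K=\ker(w_1\cdot)$ on ${\rm H}^*(\operatorname{Gr}_3(n);\mathbb{F}_2)$, a $C$-module. *)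

theory Defs
  imports "HOL-Library.Z2" "HOL-Computational_Algebra.Polynomial"
begin

text \<open>W1 = F2[w1,w2,w3] as nested univariate polynomials: the outermost variable is w3,
  the middle one w2, the innermost one w1.\<close>
type_synonym W = "bit poly poly poly"

definition w1 :: W where "w1 = monom (monom (monom 1 1) 0) 0"
definition w2 :: W where "w2 = monom (monom (monom 1 0) 1) 0"
definition w3 :: W where "w3 = monom (monom (monom 1 0) 0) 1"

definition coeff3 :: "W \<Rightarrow> nat \<Rightarrow> nat \<Rightarrow> nat \<Rightarrow> bit" where
  "coeff3 P a b c = coeff (coeff (coeff P c) b) a"

text \<open>homogeneous of degree d for the grading deg w_i = i (zero is homogeneous of every degree)\<close>
definition whomog :: "int \<Rightarrow> W \<Rightarrow> bool" where
  "whomog d P \<longleftrightarrow> (\<forall>a b c. coeff3 P a b c \<noteq> 0 \<longrightarrow> int (a + 2*b + 3*c) = d)"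

definition inW2 :: "W \<Rightarrow> bool" where
  "inW2 P \<longleftrightarrow> (\<forall>a b c. coeff3 P a b c \<noteq> 0 \<longrightarrow> a = 0)"

fun Q :: "nat \<Rightarrow> W" where
  "Q 0 = 1"
| "Q (Suc 0) = w1 * Q 0"
| "Q (Suc (Suc 0)) = w1 * Q 1 + w2 * Q 0"
| "Q (Suc (Suc (Suc m))) = w1 * Q (m+2) + w2 * Q (m+1) + w3 * Q m"

fun q :: "nat \<Rightarrow> W" where
  "q 0 = 1"
| "q (Suc 0) = 0"
| "q (Suc (Suc 0)) = w2 * q 0"
| "q (Suc (Suc (Suc m))) = w2 * q (m+1) + w3 * q m"

fun r :: "nat \<Rightarrow> W" where
  "r 0 = 1"
| "r (Suc 0) = w2 * r 0"
| "r (Suc (Suc 0)) = w2 * r 1"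
| "r (Suc (Suc (Suc m))) = w2 * r (m+2) + w3^2 * r m"

definition p :: "nat \<Rightarrow> W" where
  "p m = (THE x. Q m - q m = w1 * x)"

text \<open>the ideal (Q_{n-2}, Q_{n-1}, Q_n) of W1, defining H^*(Gr_3(n))\<close>
definition Iid :: "nat \<Rightarrow> W set" where
  "Iid n = {a * Q (n-2) + b * Q (n-1) + c * Q n | a b c. True}"

text \<open>the ideal (q_{n-2}, q_{n-1}, q_n) of W2, defining C\<close>
definition Jid :: "nat \<Rightarrow> W set" where
  "Jid n = {a * q (n-2) + b * q (n-1) + c * q n | a b c. inW2 a \<and> inW2 b \<and> inW2 c}"

end

theory Submission
  imports Defs "HOL-Computational_Algebra.Field_as_Ring" "HOL-Computational_Algebra.Polynomial_Factorial"
begin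

text \<open>
  Reduction modulo \<open>w1\<close> maps the cohomology ring onto \<open>C\<close>. Past \<open>N = 2^(t-1)\<close> the sequence
  \<open>q\<close> restarts, because \<open>q (N - 3) = 0\<close> (Frobenius: \<open>q\<close> at doubled indices is a sum of squares);
  this makes \<open>(q (n-2), q (n-1), q n)\<close> the vector of \<open>2 \<times> 2\<close> minors \<open>u \<times> v\<close> of the matrix
  with rows \<open>u = (r j, w3 r (j-2), r (j-1))\<close> and \<open>v = (w3 q (i-1), q (i+1), q i)\<close>, so that
  \<open>(Q (n-2), Q (n-1), Q n) = u \<times> v + w1 P\<close> with \<open>P = (p (n-2), p (n-1), p n)\<close>.
  If \<open>w1 x\<close> lies in the ideal, reducing its coefficients modulo \<open>w1\<close> gives a syzygy of \<open>u \<times> v\<close>;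
  as the minors have no common factor, Hilbert--Burch writes it as \<open>a u + d v\<close>, and the identity
  \<open>(a u + d v) \<cdot> (u \<times> v + w1 P) = w1 (a (u \<cdot> P) + d (v \<cdot> P))\<close> shows that \<open>x\<close> is a combination of
  \<open>A = u \<cdot> P\<close> and \<open>D = v \<cdot> P\<close>. Conversely a relation between \<open>A\<close> and \<open>D\<close> is a syzygy of the
  \<open>Q\<close>'s; these form a regular sequence (consecutive \<open>Q\<close>'s are coprime and \<open>w3\<close> is a
  non-zero-divisor modulo them), so the syzygy is Koszul, and modulo \<open>w1\<close> the Koszul syzygies
  are exactly the three stated relations.
\<close>

instantiation bit ::
  "{unique_euclidean_ring, normalization_euclidean_semiring, normalization_semidom_multiplicative}"
begin
definition [simp]: "normalize_bit = (normalize_field :: bit \<Rightarrow> _)"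
definition [simp]: "unit_factor_bit = (unit_factor_field :: bit \<Rightarrow> _)"
definition [simp]: "euclidean_size_bit = (euclidean_size_field :: bit \<Rightarrow> _)"
definition [simp]: "division_segment (x :: bit) = 1"
instance
  by standard
    (auto simp add: dvd_field_iff field_split_simps modulo_bit_def split: if_splits)
end

instantiation bit :: euclidean_ring_gcd
begin
definition gcd_bit :: "bit \<Rightarrow> bit \<Rightarrow> bit" where "gcd_bit = Euclidean_Algorithm.gcd"
definition lcm_bit :: "bit \<Rightarrow> bit \<Rightarrow> bit" where "lcm_bit = Euclidean_Algorithm.lcm"
definition Gcd_bit :: "bit set \<Rightarrow> bit" where "Gcd_bit = Euclidean_Algorithm.Gcd"
definition Lcm_bit :: "bit set \<Rightarrow> bit" where "Lcm_bit = Euclidean_Algorithm.Lcm"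
instance by standard (simp_all add: gcd_bit_def lcm_bit_def Gcd_bit_def Lcm_bit_def)
end

instance bit :: field_gcd ..

text \<open>The default simp rules for \<open>bit\<close> rewrite its arithmetic into Boolean operations, which
  derails the coefficient computations below.\<close>

declare bit_not_zero_iff [simp del] bit_not_one_iff [simp del] add_bit_eq_xor [simp del]
  mult_bit_eq_and [simp del] power_bit_unfold [simp del] modulo_bit_unfold [simp del]

lemma two_W: "(2::W) = 0"
  by (metis bit_2_eq_0 of_nat_numeral of_nat_poly pCons_0_0)

lemma add_self_W [simp]: "(x::W) + x = 0"
  by (metis mult_2 two_W mult_zero_left)

lemma add_self_W' [simp]: "(x::W) + (x + y) = y"
  by (metis add.assoc add_self_W add_0)

lemma minus_W: "- (x::W) = x"
  by (metis add_eq_0_iff add_self_W)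

lemma diff_W: "(x::W) - y = x + y"
  by (metis diff_conv_add_uminus minus_W)

lemma W_eqI: "(\<And>a b c. coeff3 P a b c = coeff3 R a b c) \<Longrightarrow> P = R"
  unfolding coeff3_def by (intro poly_eqI) blast

lemma coeff3_add [simp]: "coeff3 (P + R) a b c = coeff3 P a b c + coeff3 R a b c"
  by (simp add: coeff3_def)

lemma coeff3_0 [simp]: "coeff3 0 a b c = 0"
  by (simp add: coeff3_def)

lemma coeff3_mult: "coeff3 (P * R) a b c =
   (\<Sum>k\<le>c. \<Sum>l\<le>b. \<Sum>h\<le>a. coeff3 P h l k * coeff3 R (a-h) (b-l) (c-k))"
  by (simp add: coeff3_def coeff_mult coeff_sum)

lemma coeff3_1: "coeff3 1 a b c = (if a = 0 \<and> b = 0 \<and> c = 0 then 1 else 0)"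
  by (simp add: coeff3_def coeff_1)

lemma coeff3_w1: "coeff3 w1 a b c = (if a = 1 \<and> b = 0 \<and> c = 0 then 1 else 0)"
  by (simp add: coeff3_def w1_def coeff_monom)

lemma coeff3_w2: "coeff3 w2 a b c = (if a = 0 \<and> b = 1 \<and> c = 0 then 1 else 0)"
  by (simp add: coeff3_def w2_def coeff_monom)

lemma coeff3_w3: "coeff3 w3 a b c = (if a = 0 \<and> b = 0 \<and> c = 1 then 1 else 0)"
  by (simp add: coeff3_def w3_def coeff_monom)

lemma coeff3_w1_mult: "coeff3 (w1 * X) a b c = (if a = 0 then 0 else coeff3 X (a-1) b c)"
  by (cases a) (simp_all add: coeff3_def w1_def monom_0 coeff_monom_mult)

lemma w1_neq_0: "w1 \<noteq> 0"
  by (metis coeff3_0 coeff3_w1 zero_neq_one)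

lemma w3_neq_0: "w3 \<noteq> 0"
  by (metis coeff3_0 coeff3_w3 zero_neq_one)

lemma whomog_0 [simp]: "whomog d 0"
  by (simp add: whomog_def)

lemma whomog_1: "whomog 0 1"
  by (simp add: whomog_def coeff3_1)

lemma whomog_w1: "whomog 1 w1"
  by (simp add: whomog_def coeff3_w1)

lemma whomog_w2: "whomog 2 w2"
  by (simp add: whomog_def coeff3_w2)

lemma whomog_w3: "whomog 3 w3"
  by (simp add: whomog_def coeff3_w3)

lemma whomog_add: "whomog d P \<Longrightarrow> whomog d R \<Longrightarrow> whomog d (P + R)"
  unfolding whomog_def by (metis coeff3_add add_0 add_0_right)

lemma whomog_mult:
  assumes "whomog d1 P" "whomog d2 R" "d1 + d2 = d"
  shows "whomog d (P * R)"
  unfolding whomog_def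
proof (intro allI impI)
  fix a b c assume "coeff3 (P * R) a b c \<noteq> 0"
  then obtain k l h where "k \<le> c" "l \<le> b" "h \<le> a"
    and nz: "coeff3 P h l k * coeff3 R (a-h) (b-l) (c-k) \<noteq> 0"
    unfolding coeff3_mult by (auto elim!: sum.not_neutral_contains_not_neutral)
  moreover from nz assms(1,2) have "int (h + 2*l + 3*k) = d1" "int ((a-h) + 2*(b-l) + 3*(c-k)) = d2"
    unfolding whomog_def by (metis mult_zero_left mult_zero_right)+
  ultimately show "int (a + 2*b + 3*c) = d" using assms(3) by linarith
qed

lemma whomog_w1_mult_cancel:
  assumes "whomog d (w1 * X)" shows "whomog (d - 1) X"
  unfolding whomog_def
proof (intro allI impI)
  fix a b c assume "coeff3 X a b c \<noteq> 0"
  then have "coeff3 (w1 * X) (Suc a) b c \<noteq> 0" by (simp add: coeff3_w1_mult)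
  with assms have "int (Suc a + 2*b + 3*c) = d" unfolding whomog_def by blast
  then show "int (a + 2*b + 3*c) = d - 1" by simp
qed

section \<open>Reduction modulo w1\<close>

definition mod_w1 :: "W \<Rightarrow> W" where
  "mod_w1 P = map_poly (map_poly (\<lambda>x. [:poly x 0:])) P"

definition div_w1 :: "W \<Rightarrow> W" where
  "div_w1 P = map_poly (map_poly (\<lambda>x. synthetic_div x 0)) P"

lemma coeff3_mod_w1: "coeff3 (mod_w1 P) a b c = (if a = 0 then coeff3 P 0 b c else 0)"
  by (simp add: coeff3_def mod_w1_def coeff_map_poly poly_0_coeff_0 coeff_pCons')

lemma mod_w1_div_w1: "mod_w1 P + w1 * div_w1 P = P"
proof (rule W_eqI)
  fix a b c
  have "x = pCons (poly x 0) (synthetic_div x 0)" for x :: "bit poly"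
    using synthetic_div_correct[of x 0] by simp
  then have "coeff x a = (if a = 0 then poly x 0 else coeff (synthetic_div x 0) (a - 1))"
    for x :: "bit poly"
    by (metis coeff_pCons')
  then show "coeff3 (mod_w1 P + w1 * div_w1 P) a b c = coeff3 P a b c"
    by (cases a) (simp_all add: coeff3_w1_mult coeff3_mod_w1,
        simp_all add: coeff3_def div_w1_def coeff_map_poly)
qed

lemma inW2_iff_mod_w1: "inW2 P \<longleftrightarrow> mod_w1 P = P"
proof
  assume "inW2 P" then show "mod_w1 P = P"
    by (intro W_eqI) (auto simp: inW2_def coeff3_mod_w1)
next
  assume "mod_w1 P = P" then show "inW2 P"
    by (metis inW2_def coeff3_mod_w1)
qed

lemma mod_w1_idem [simp]: "mod_w1 (mod_w1 P) = mod_w1 P"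
  by (rule W_eqI) (simp add: coeff3_mod_w1)

lemma inW2_mod_w1: "inW2 (mod_w1 P)"
  by (simp add: inW2_iff_mod_w1)

lemma mod_w1_add [simp]: "mod_w1 (P + R) = mod_w1 P + mod_w1 R"
  by (rule W_eqI) (simp add: coeff3_mod_w1)

lemma mod_w1_0 [simp]: "mod_w1 0 = 0"
  by (rule W_eqI) (simp add: coeff3_mod_w1)

lemma mod_w1_mult [simp]: "mod_w1 (P * R) = mod_w1 P * mod_w1 R"
proof (rule W_eqI)
  fix a b c
  have "coeff3 (mod_w1 P * mod_w1 R) a b c = 0" if "a \<noteq> 0"
    unfolding coeff3_mult using that
    by (intro sum.neutral ballI) (auto simp: coeff3_mod_w1)
  then show "coeff3 (mod_w1 (P * R)) a b c = coeff3 (mod_w1 P * mod_w1 R) a b c"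
    by (cases "a = 0") (simp_all add: coeff3_mod_w1 coeff3_mult)
qed

lemma mod_w1_diff [simp]: "mod_w1 (P - R) = mod_w1 P - mod_w1 R"
  by (simp add: diff_W)

lemma inW2_1: "inW2 1"
  by (simp add: inW2_def coeff3_1)

lemma inW2_w2: "inW2 w2"
  by (simp add: inW2_def coeff3_w2)

lemma inW2_w3: "inW2 w3"
  by (simp add: inW2_def coeff3_w3)

lemma inW2_mult: "inW2 P \<Longrightarrow> inW2 R \<Longrightarrow> inW2 (P * R)"
  by (simp add: inW2_iff_mod_w1)

lemma mod_w1_1 [simp]: "mod_w1 1 = 1"
  using inW2_1 inW2_iff_mod_w1 by blast

lemma mod_w1_power [simp]: "mod_w1 (P ^ k) = mod_w1 P ^ k"
  by (induction k) simp_all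

lemma mod_w1_w1 [simp]: "mod_w1 w1 = 0"
  by (rule W_eqI) (simp add: coeff3_mod_w1 coeff3_w1)

lemma mod_w1_w2 [simp]: "mod_w1 w2 = w2"
  using inW2_w2 inW2_iff_mod_w1 by blast

lemma mod_w1_w3 [simp]: "mod_w1 w3 = w3"
  using inW2_w3 inW2_iff_mod_w1 by blast

lemma Q_Suc_Suc_Suc: "Q (Suc (Suc (Suc m))) = w1 * Q (Suc (Suc m)) + w2 * Q (Suc m) + w3 * Q m"
  by simp

lemma mod_w1_Q [simp]: "mod_w1 (Q m) = q m"
  by (induction m rule: Q.induct) simp_all

lemma mod_w1_q [simp]: "mod_w1 (q m) = q m"
  by (induction m rule: q.induct) simp_all

lemma mod_w1_r [simp]: "mod_w1 (r m) = r m"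
  by (induction m rule: r.induct) simp_all

lemma inW2_q: "inW2 (q m)"
  by (simp add: inW2_iff_mod_w1)

lemma inW2_r: "inW2 (r m)"
  by (simp add: inW2_iff_mod_w1)

lemma Q_eq_q_plus_w1_p: "Q m = q m + w1 * p m"
proof -
  have dec: "Q m = q m + w1 * div_w1 (Q m)"
    using mod_w1_div_w1[of "Q m"] by simp
  then have diff: "Q m - q m = w1 * div_w1 (Q m)"
    by (metis add_diff_cancel_left')
  have "p m = div_w1 (Q m)"
    unfolding p_def by (rule the_equality) (use diff w1_neq_0 in simp_all)
  with dec show ?thesis by simp
qed

lemma whomog_q: "whomog (int m) (q m)"
  by (induction m rule: q.induct)
    (auto intro!: whomog_add whomog_mult whomog_1 whomog_w2 whomog_w3)

lemma whomog_r: "whomog (2 * int m) (r m)"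
  by (induction m rule: r.induct)
    (auto intro!: whomog_add whomog_mult whomog_1 whomog_w2 whomog_w3 simp: power2_eq_square)

lemma whomog_Q: "whomog (int m) (Q m)"
  by (induction m rule: Q.induct)
    (auto intro!: whomog_add whomog_mult whomog_1 whomog_w1 whomog_w2 whomog_w3)

lemma whomog_p: "whomog (int m - 1) (p m)"
proof (rule whomog_w1_mult_cancel)
  have "w1 * p m = Q m + q m"
    using Q_eq_q_plus_w1_p[of m] by (metis add.commute add_self_W')
  then show "whomog (int m) (w1 * p m)"
    using whomog_add[OF whomog_Q whomog_q] by simp
qed

section \<open>The values of \<open>q\<close> beyond a power of two\<close>

definition qz :: "int \<Rightarrow> W" where "qz k = (if k < 0 then 0 else q (nat k))"

definition rz :: "int \<Rightarrow> W" where "rz k = (if k < 0 then 0 else r (nat k))"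

lemma qz_neg [simp]: "k < 0 \<Longrightarrow> qz k = 0" and rz_neg [simp]: "k < 0 \<Longrightarrow> rz k = 0"
  and qz_int [simp]: "qz (int m) = q m" and rz_int [simp]: "rz (int m) = r m"
  by (simp_all add: qz_def rz_def)

lemma int_nonzero_cases:
  fixes k :: int
  assumes "k \<noteq> 0"
  obtains "k < 0" | "k = 1" | "k = 2" | m where "k = int m + 3"
proof -
  consider "k < 0" | "k = 1" | "k = 2" | "k \<ge> 3" using assms by linarith
  then show thesis
  proof cases
    case 4
    then have "k = int (nat (k - 3)) + 3" by simp
    then show thesis by (rule that(4))
  qed (use that in blast)+
qed

lemma qz_rec: "k \<noteq> 0 \<Longrightarrow> qz k = w2 * qz (k-2) + w3 * qz (k-3)"
proof (erule int_nonzero_cases)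
  fix m assume "k = int m + 3"
  then have "nat k = Suc (Suc (Suc m))" "nat (k-2) = Suc m" "nat (k-3) = m" by simp_all
  then show ?thesis using \<open>k = int m + 3\<close> by (simp add: qz_def)
qed (simp_all add: qz_def numeral_2_eq_2)

lemma rz_rec: "k \<noteq> 0 \<Longrightarrow> rz k = w2 * rz (k-1) + w3^2 * rz (k-3)"
proof (erule int_nonzero_cases)
  fix m assume "k = int m + 3"
  then have "nat k = Suc (Suc (Suc m))" "nat (k-1) = Suc (Suc m)" "nat (k-3) = m" by simp_all
  then show ?thesis using \<open>k = int m + 3\<close> by (simp add: rz_def)
qed (simp_all add: rz_def numeral_2_eq_2)

text \<open>The cross terms of the squares cancel in characteristic two.\<close>

lemma qz_double: "qz (2*k) = qz k ^ 2 + w2 * qz (k-1) ^ 2 \<and> qz (2*k+1) = w3 * qz (k-1) ^ 2"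
proof (induction "nat k" arbitrary: k rule: less_induct)
  case less
  consider "k < 0" | "k = 0" | "k > 0" by linarith
  then show ?case
  proof cases
    case 3
    have ih1: "qz (2*k-2) = qz (k-1) ^ 2 + w2 * qz (k-2) ^ 2" "qz (2*k-1) = w3 * qz (k-2) ^ 2"
      using less[of "k-1"] 3 by (simp_all add: algebra_simps)
    have ih2: "qz (2*k-3) = w3 * qz (k-3) ^ 2"
      using less[of "k-2"] 3 by (simp add: algebra_simps)
    have "qz (2*k) = w2 * qz (2*k-2) + w3 * qz (2*k-3)" "qz (2*k+1) = w2 * qz (2*k-1) + w3 * qz (2*k-2)"
      "qz k = w2 * qz (k-2) + w3 * qz (k-3)"
      using qz_rec[of "2*k"] qz_rec[of "2*k+1"] qz_rec[of k] 3 by (simp_all add: algebra_simps)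
    then show ?thesis
      unfolding ih1 ih2 by (simp add: algebra_simps power2_eq_square)
  qed (simp_all add: qz_def)
qed

lemma qz_pow2_minus_3: "1 \<le> s \<Longrightarrow> qz (2^s - 3) = 0"
proof (induction s rule: nat_induct_at_least)
  case (Suc s)
  have "(2::int) ^ Suc s - 3 = 2 * (2^s - 2) + 1" by simp
  then show ?case using qz_double[of "2^s - 2"] Suc.IH by simp
qed simp

lemma qz_split_step:
  fixes N j :: int
  assumes "qz (N-3+j) = w3 * rz (j-2) * qz (N-2-j) + rz (j-1) * qz (N-1-j)"
    and "qz (N-2+j) = rz j * qz (N-2-j) + w3 * rz (j-1) * qz (N-3-j)"
    and "qz (N-1+j) = rz j * qz (N-1-j) + w3^2 * rz (j-2) * qz (N-3-j)"
    and "0 \<le> j" "j + 1 \<le> N - 2"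
  shows "qz (N-2+j) = w3 * rz (j-1) * qz (N-3-j) + rz j * qz (N-2-j)"
    and "qz (N-1+j) = rz (j+1) * qz (N-3-j) + w3 * rz j * qz (N-4-j)"
    and "qz (N+j) = rz (j+1) * qz (N-2-j) + w3^2 * rz (j-1) * qz (N-4-j)"
proof -
  have rec: "rz (j+1) = w2 * rz j + w3^2 * rz (j-2)"
    "qz (N-1-j) = w2 * qz (N-3-j) + w3 * qz (N-4-j)"
    "qz (N+j) = w2 * qz (N-2+j) + w3 * qz (N-3+j)"
    using rz_rec[of "j+1"] qz_rec[of "N-1-j"] qz_rec[of "N+j"] assms(4,5)
    by (simp_all add: algebra_simps)
  show "qz (N-2+j) = w3 * rz (j-1) * qz (N-3-j) + rz j * qz (N-2-j)"
    using assms(2) by (simp add: ac_simps)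
  show "qz (N-1+j) = rz (j+1) * qz (N-3-j) + w3 * rz j * qz (N-4-j)"
    unfolding assms(3) rec(1,2) by (simp add: algebra_simps)
  show "qz (N+j) = rz (j+1) * qz (N-2-j) + w3^2 * rz (j-1) * qz (N-4-j)"
    unfolding rec(3,1) assms(1,2) unfolding rec(2) by (simp add: algebra_simps power2_eq_square)
qed

text \<open>Induction on \<open>j\<close>, running the recurrence of \<open>r\<close> forwards and that of \<open>q\<close> backwards;
  the vanishing of \<open>q (N-3)\<close> starts it.\<close>

lemma qz_split:
  fixes N j :: int
  assumes N: "qz (N - 3) = 0" and "0 \<le> j" "j \<le> N - 2"
  shows "qz (N-3+j) = w3 * rz (j-2) * qz (N-2-j) + rz (j-1) * qz (N-1-j)"
    and "qz (N-2+j) = rz j * qz (N-2-j) + w3 * rz (j-1) * qz (N-3-j)"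
    and "qz (N-1+j) = rz j * qz (N-1-j) + w3^2 * rz (j-2) * qz (N-3-j)"
proof -
  have "j \<le> N - 2 \<longrightarrow>
      qz (N-3+j) = w3 * rz (j-2) * qz (N-2-j) + rz (j-1) * qz (N-1-j) \<and>
      qz (N-2+j) = rz j * qz (N-2-j) + w3 * rz (j-1) * qz (N-3-j) \<and>
      qz (N-1+j) = rz j * qz (N-1-j) + w3^2 * rz (j-2) * qz (N-3-j)"
    using \<open>0 \<le> j\<close>
  proof (induction j rule: int_ge_induct)
    case base
    show ?case using N by (simp add: rz_def)
  next
    case (step j)
    have idx: "N-3+(j+1) = N-2+j" "j+1-2 = j-1" "N-2-(j+1) = N-3-j" "j+1-1 = j"
      "N-1-(j+1) = N-2-j" "N-2+(j+1) = N-1+j" "N-3-(j+1) = N-4-j" "N-1+(j+1) = N+j"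
      by simp_all
    show ?case
      unfolding idx using qz_split_step[of N j] step by simp
  qed
  with assms(3) show "qz (N-3+j) = w3 * rz (j-2) * qz (N-2-j) + rz (j-1) * qz (N-1-j)"
    and "qz (N-2+j) = rz j * qz (N-2-j) + w3 * rz (j-1) * qz (N-3-j)"
    and "qz (N-1+j) = rz j * qz (N-1-j) + w3^2 * rz (j-2) * qz (N-3-j)"
    by simp_all
qed

lemma q_cross_factorization:
  fixes N i j :: nat
  assumes "qz (int N - 3) = 0" "1 \<le> i" "2 \<le> j" "i + j + 2 = N"
  shows "q (N + j - 3) = w3 * r (j-2) * q i - r (j-1) * q (i+1)"
    and "q (N + j - 2) = r (j-1) * (w3 * q (i-1)) - r j * q i"
    and "q (N + j - 1) = r j * q (i+1) - w3 * r (j-2) * (w3 * q (i-1))"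
proof -
  have "0 \<le> int j" "int j \<le> int N - 2" using assms by simp_all
  note split = qz_split[OF assms(1) this]
  have idx: "int N - 3 + int j = int (N + j - 3)" "int j - 2 = int (j-2)" "int N - 2 - int j = int i"
    "int j - 1 = int (j-1)" "int N - 1 - int j = int (i+1)" "int N - 2 + int j = int (N + j - 2)"
    "int N - 3 - int j = int (i-1)" "int N - 1 + int j = int (N + j - 1)"
    using assms by simp_all
  show "q (N + j - 3) = w3 * r (j-2) * q i - r (j-1) * q (i+1)"
    and "q (N + j - 2) = r (j-1) * (w3 * q (i-1)) - r j * q i"
    and "q (N + j - 1) = r j * q (i+1) - w3 * r (j-2) * (w3 * q (i-1))"
    using split unfolding idx qz_int rz_int by (simp_all add: diff_W ac_simps power2_eq_square)
qed

section \<open>Divisors of homogeneous elements\<close>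

definition map_poly_idx :: "(nat \<Rightarrow> 'a \<Rightarrow> 'b) \<Rightarrow> 'a::zero poly \<Rightarrow> 'b::zero poly" where
  "map_poly_idx f P = Abs_poly (\<lambda>k. f k (coeff P k))"

lemma coeff_map_poly_idx:
  assumes "\<And>k. f k 0 = 0" shows "coeff (map_poly_idx f P) k = f k (coeff P k)"
proof -
  have "\<forall>\<^sub>\<infinity>k. f k (coeff P k) = 0"
    using MOST_coeff_eq_0[of P] by eventually_elim (simp add: assms)
  then show ?thesis by (simp add: map_poly_idx_def Abs_poly_inverse)
qed

definition hcomp :: "nat \<Rightarrow> W \<Rightarrow> W" where
  "hcomp d = map_poly_idx (\<lambda>c. map_poly_idx (\<lambda>b. map_poly_idx
     (\<lambda>a x. if a + 2*b + 3*c = d then x else 0)))"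

lemma coeff3_hcomp: "coeff3 (hcomp d P) a b c = (if a + 2*b + 3*c = d then coeff3 P a b c else 0)"
proof -
  have zero: "map_poly_idx f 0 = 0" if "\<And>k. f k 0 = 0" for f :: "nat \<Rightarrow> 'a::zero \<Rightarrow> 'b::zero"
    by (rule poly_eqI) (simp add: coeff_map_poly_idx that)
  show ?thesis
    by (simp add: hcomp_def coeff3_def coeff_map_poly_idx zero)
qed

lemma coeff3_sum: "coeff3 (sum f S) a b c = (\<Sum>x\<in>S. coeff3 (f x) a b c)"
  by (simp add: coeff3_def coeff_sum)

lemma hcomp_mult: "hcomp d (A * B) = (\<Sum>i\<le>d. hcomp i A * hcomp (d - i) B)"
proof (rule W_eqI)
  fix a b c
  have delta: "(\<Sum>i\<le>d. (if e = i then X else 0) * (if e' = d - i then Y else 0)) =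
      (if e + e' = d then X * Y else 0)" for e e' :: nat and X Y :: bit
    by (subst sum.cong[OF refl, where h = "\<lambda>i. if i = e then (if e' = d - e then X * Y else 0) else 0"])
      auto
  have "coeff3 (\<Sum>i\<le>d. hcomp i A * hcomp (d - i) B) a b c =
    (\<Sum>i\<le>d. \<Sum>k\<le>c. \<Sum>l\<le>b. \<Sum>h\<le>a. (if h + 2*l + 3*k = i then coeff3 A h l k else 0) *
       (if (a-h) + 2*(b-l) + 3*(c-k) = d - i then coeff3 B (a-h) (b-l) (c-k) else 0))"
    by (simp add: coeff3_sum coeff3_mult coeff3_hcomp)
  also have "\<dots> = (\<Sum>k\<le>c. \<Sum>l\<le>b. \<Sum>h\<le>a. \<Sum>i\<le>d. (if h + 2*l + 3*k = i then coeff3 A h l k else 0) *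
       (if (a-h) + 2*(b-l) + 3*(c-k) = d - i then coeff3 B (a-h) (b-l) (c-k) else 0))"
    by (simp only: sum.swap[of _ "{..d}"])
  also have "\<dots> = (\<Sum>k\<le>c. \<Sum>l\<le>b. \<Sum>h\<le>a. if a + 2*b + 3*c = d
      then coeff3 A h l k * coeff3 B (a-h) (b-l) (c-k) else 0)"
    by (intro sum.cong refl) (auto simp: delta)
  also have "\<dots> = coeff3 (hcomp d (A * B)) a b c"
    by (simp add: coeff3_hcomp coeff3_mult)
  finally show "coeff3 (hcomp d (A * B)) a b c = coeff3 (\<Sum>i\<le>d. hcomp i A * hcomp (d - i) B) a b c"
    by simp
qed

lemma hcomp_mult_single:
  assumes "\<And>i. i \<le> s + t \<Longrightarrow> i \<noteq> s \<Longrightarrow> hcomp i A * hcomp (s + t - i) B = 0"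
  shows "hcomp (s + t) (A * B) = hcomp s A * hcomp t B"
proof -
  have "hcomp (s + t) (A * B) = hcomp s A * hcomp (s + t - s) B"
    unfolding hcomp_mult by (subst sum.remove[of _ s]) (auto intro!: sum.neutral assms)
  then show ?thesis by simp
qed

lemma whomog_iff_hcomp: "whomog (int e) P \<longleftrightarrow> (\<forall>d. d \<noteq> e \<longrightarrow> hcomp d P = 0)"
proof
  assume "whomog (int e) P"
  then show "\<forall>d. d \<noteq> e \<longrightarrow> hcomp d P = 0"
    unfolding whomog_def by (intro allI impI W_eqI) (metis coeff3_0 coeff3_hcomp of_nat_eq_iff)
next
  assume h: "\<forall>d. d \<noteq> e \<longrightarrow> hcomp d P = 0"
  show "whomog (int e) P" unfolding whomog_def
  proof (intro allI impI)
    fix a b c assume "coeff3 P a b c \<noteq> 0"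
    then have "hcomp (a + 2*b + 3*c) P \<noteq> 0"
      by (metis coeff3_0 coeff3_hcomp)
    with h have "a + 2*b + 3*c = e" by blast
    then show "int (a + 2*b + 3*c) = int e" by (rule arg_cong)
  qed
qed

definition hdegs :: "W \<Rightarrow> nat set" where
  "hdegs P = {d. hcomp d P \<noteq> 0}"

lemma finite_hdegs: "finite (hdegs P)"
proof -
  let ?S = "Sigma {..degree P} (\<lambda>c. Sigma {..degree (coeff P c)} (\<lambda>b. {..degree (coeff (coeff P c) b)}))"
  have "hdegs P \<subseteq> (\<lambda>(c, b, a). a + 2*b + 3*c) ` ?S"
  proof
    fix d assume "d \<in> hdegs P"
    then obtain a b c where "coeff3 (hcomp d P) a b c \<noteq> 0"
      using W_eqI[of "hcomp d P" 0] by (auto simp: hdegs_def)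
    then have "coeff3 P a b c \<noteq> 0" and d: "d = a + 2*b + 3*c"
      by (auto simp: coeff3_hcomp split: if_splits)
    then have "coeff (coeff (coeff P c) b) a \<noteq> 0"
      by (simp add: coeff3_def)
    then have "(c, b, a) \<in> ?S"
      by (auto intro!: le_degree)
    then show "d \<in> (\<lambda>(c, b, a). a + 2*b + 3*c) ` ?S"
      unfolding d by (rule rev_image_eqI) simp
  qed
  then show ?thesis by (rule finite_subset) auto
qed

lemma hdegs_nonempty:
  assumes "P \<noteq> 0" shows "hdegs P \<noteq> {}"
proof -
  obtain a b c where "coeff3 P a b c \<noteq> 0"
    using assms W_eqI[of P 0] by auto
  then have "hcomp (a + 2*b + 3*c) P \<noteq> 0"
    by (metis coeff3_0 coeff3_hcomp)
  then show ?thesis by (auto simp: hdegs_def)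
qed

lemma hcomp_above_Max: "Max (hdegs P) < i \<Longrightarrow> hcomp i P = 0"
  using Max_ge[OF finite_hdegs, of i P] by (auto simp: hdegs_def)

lemma hcomp_below_Min: "i < Min (hdegs P) \<Longrightarrow> hcomp i P = 0"
  using Min_le[OF finite_hdegs, of i P] by (auto simp: hdegs_def)

lemma Max_hdegs_mult:
  assumes "A \<noteq> 0" "B \<noteq> 0"
  shows "Max (hdegs A) + Max (hdegs B) \<in> hdegs (A * B)"
proof -
  have "hcomp (Max (hdegs A) + Max (hdegs B)) (A * B) = hcomp (Max (hdegs A)) A * hcomp (Max (hdegs B)) B"
  proof (rule hcomp_mult_single)
    fix i assume "i \<noteq> Max (hdegs A)"
    then consider "Max (hdegs A) < i" | "Max (hdegs B) < Max (hdegs A) + Max (hdegs B) - i"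
      by linarith
    then show "hcomp i A * hcomp (Max (hdegs A) + Max (hdegs B) - i) B = 0"
      by cases (simp_all add: hcomp_above_Max)
  qed
  moreover have "Max (hdegs A) \<in> hdegs A" "Max (hdegs B) \<in> hdegs B"
    using assms by (simp_all add: finite_hdegs hdegs_nonempty)
  ultimately show ?thesis by (simp add: hdegs_def)
qed

lemma Min_hdegs_mult:
  assumes "A \<noteq> 0" "B \<noteq> 0"
  shows "Min (hdegs A) + Min (hdegs B) \<in> hdegs (A * B)"
proof -
  have "hcomp (Min (hdegs A) + Min (hdegs B)) (A * B) = hcomp (Min (hdegs A)) A * hcomp (Min (hdegs B)) B"
  proof (rule hcomp_mult_single)
    fix i assume "i \<le> Min (hdegs A) + Min (hdegs B)" "i \<noteq> Min (hdegs A)"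
    then consider "i < Min (hdegs A)" | "Min (hdegs A) + Min (hdegs B) - i < Min (hdegs B)"
      by linarith
    then show "hcomp i A * hcomp (Min (hdegs A) + Min (hdegs B) - i) B = 0"
      by cases (simp_all add: hcomp_below_Min)
  qed
  moreover have "Min (hdegs A) \<in> hdegs A" "Min (hdegs B) \<in> hdegs B"
    using assms by (simp_all add: finite_hdegs hdegs_nonempty)
  ultimately show ?thesis by (simp add: hdegs_def)
qed

text \<open>The top and the bottom homogeneous components of a product are the products of those of the
  factors, so a factor of a homogeneous element has equal top and bottom degree.\<close>

lemma whomog_dvd:
  assumes "whomog (int e) P" "P \<noteq> 0" "A dvd P"
  shows "\<exists>e'. whomog (int e') A"
proof -
  obtain B where P: "P = A * B" using assms(3) by blast
  with assms(2) have AB: "A \<noteq> 0" "B \<noteq> 0" by auto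
  have hdegs_P: "d = e" if "d \<in> hdegs P" for d
    using assms(1) that by (auto simp: whomog_iff_hcomp hdegs_def)
  have "Max (hdegs A) + Max (hdegs B) = e" "Min (hdegs A) + Min (hdegs B) = e"
    using Max_hdegs_mult[OF AB] Min_hdegs_mult[OF AB] hdegs_P unfolding P by blast+
  moreover have "Min (hdegs A) \<le> Max (hdegs A)" "Min (hdegs B) \<le> Max (hdegs B)"
    using AB by (simp_all add: finite_hdegs hdegs_nonempty)
  ultimately have "Min (hdegs A) = Max (hdegs A)" by linarith
  then have "d = Max (hdegs A)" if "d \<in> hdegs A" for d
    using that Max_ge[OF finite_hdegs] Min_le[OF finite_hdegs] by (metis le_antisym)
  then have "whomog (int (Max (hdegs A))) A"
    unfolding whomog_iff_hcomp hdegs_def by blast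
  then show ?thesis ..
qed

section \<open>Coprimality\<close>

lemma is_unit_gcdI:
  fixes a b :: "'a::factorial_ring_gcd"
  assumes "gcd a b \<noteq> 0" and "\<And>p. prime p \<Longrightarrow> p dvd a \<Longrightarrow> p dvd b \<Longrightarrow> False"
  shows "is_unit (gcd a b)"
proof (rule ccontr)
  assume "\<not> is_unit (gcd a b)"
  with assms(1) obtain p where "prime p" "p dvd gcd a b" by (metis prime_divisorE)
  with assms(2) show False by (meson dvd_gcdD1 dvd_gcdD2)
qed

lemma prime_factor_of_X:
  fixes pp x :: "'a::{idom_divide,ring_gcd,factorial_semiring,semiring_Gcd,semiring_gcd_mult_normalize} poly"
  assumes "prime_elem pp" "pp dvd [:0, 1:]" "pp dvd x"
  shows "poly x 0 = 0"
proof -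
  obtain s where s: "[:0, 1:] = pp * s" using assms(2) by blast
  have "irreducible ([:0, 1:] :: 'a poly)"
    by (rule irreducible_linear_poly) simp_all
  with s have "is_unit s"
    using prime_elem_not_unit[OF assms(1)] irreducibleD by blast
  with s have "[:0, 1:] dvd pp" by (metis dvd_mult_unit_iff dvd_refl)
  with assms(3) have "[:0, 1:] dvd x" using dvd_trans by blast
  then show ?thesis using dvd_iff_poly_eq_0[of 0 x] by simp
qed

definition mod_w3 :: "W \<Rightarrow> bit poly poly" where
  "mod_w3 P = poly P 0"

lemma mod_w3_add [simp]: "mod_w3 (P + R) = mod_w3 P + mod_w3 R"
  and mod_w3_diff [simp]: "mod_w3 (P - R) = mod_w3 P - mod_w3 R"
  and mod_w3_mult [simp]: "mod_w3 (P * R) = mod_w3 P * mod_w3 R"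
  and mod_w3_0 [simp]: "mod_w3 0 = 0"
  and mod_w3_1 [simp]: "mod_w3 1 = 1"
  and mod_w3_const [simp]: "mod_w3 [:s:] = s"
  and mod_w3_smult [simp]: "mod_w3 (smult s P) = s * mod_w3 P"
  by (simp_all add: mod_w3_def poly_diff)

lemma w3_eq_X: "w3 = [:0, 1:]"
  by (simp add: w3_def monom_Suc monom_0 one_pCons)

lemma mod_w3_w1: "mod_w3 w1 = [:[:0, 1:]:]"
  by (simp add: mod_w3_def w1_def monom_Suc monom_0 one_pCons)

lemma mod_w3_w2: "mod_w3 w2 = [:0, 1:]"
  by (simp add: mod_w3_def w2_def monom_Suc monom_0 one_pCons)

lemma mod_w3_w3 [simp]: "mod_w3 w3 = 0"
  by (simp add: mod_w3_def w3_eq_X)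

lemma w3_dvd_iff: "w3 dvd P \<longleftrightarrow> mod_w3 P = 0"
  using dvd_iff_poly_eq_0[of 0 P] by (simp add: w3_eq_X mod_w3_def)

text \<open>Modulo \<open>(w2, w3)\<close> the element \<open>Q m\<close> becomes \<open>w1^m\<close>.\<close>

lemma mod_w3_Q_at_0: "poly (mod_w3 (Q m)) 0 = [:0, 1:] ^ m"
  by (induction m rule: Q.induct) (simp_all add: mod_w3_w1 mod_w3_w2)

lemma mod_w3_Q_neq_0: "mod_w3 (Q m) \<noteq> 0"
  using mod_w3_Q_at_0[of m] by auto

lemma Q_neq_0: "Q m \<noteq> 0"
  using mod_w3_Q_neq_0[of m] by auto

lemma mod_w3_Q_no_common_prime:
  "prime_elem pp \<Longrightarrow> pp dvd mod_w3 (Q m) \<Longrightarrow> pp dvd mod_w3 (Q (Suc m)) \<Longrightarrow> False"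
proof (induction m)
  case 0
  then show ?case using prime_elem_not_unit by auto
next
  case (Suc m)
  have "mod_w3 (Q (Suc (Suc m))) = mod_w3 w1 * mod_w3 (Q (Suc m)) + [:0, 1:] * mod_w3 (Q m)"
    by (cases m) (simp_all add: mod_w3_w2)
  with Suc.prems(2,3) have "pp dvd [:0, 1:] * mod_w3 (Q m)"
    by (simp add: dvd_add_right_iff)
  with Suc.prems(1) consider "pp dvd [:0, 1:]" | "pp dvd mod_w3 (Q m)"
    using prime_elem_dvd_mult_iff by blast
  then show False
  proof cases
    case 1
    then have "poly (mod_w3 (Q (Suc m))) 0 = 0"
      using prime_factor_of_X Suc.prems(1,2) by blast
    then show False by (simp add: mod_w3_Q_at_0)
  qed (use Suc in blast)
qed

lemma coprime_mod_w3_Q: "coprime (mod_w3 (Q m)) (mod_w3 (Q (Suc m)))"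
  using is_unit_gcdI mod_w3_Q_neq_0 mod_w3_Q_no_common_prime prime_imp_prime_elem
  by (metis gcd_eq_0_iff is_unit_gcd)

lemma whomog_eq_1_if_unit_mod_w3:
  assumes "whomog (int e) P" "is_unit (mod_w3 P)"
  shows "P = 1"
proof -
  obtain c where c: "mod_w3 P = [:[:c:]:]" "is_unit c"
    using assms(2) by (auto simp: is_unit_poly_iff)
  then have "c = 1" by (metis bit_not_zero_iff not_is_unit_0)
  with c have P000: "coeff3 P 0 0 0 = 1"
    by (simp add: coeff3_def mod_w3_def poly_0_coeff_0)
  with assms(1) have "e = 0" unfolding whomog_def by (metis add_0 mult_0_right of_nat_eq_0_iff one_neq_zero)
  show ?thesis
  proof (rule W_eqI)
    fix a b c
    show "coeff3 P a b c = coeff3 1 a b c"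
      using assms(1) P000 \<open>e = 0\<close> unfolding whomog_def coeff3_1 by fastforce
  qed
qed

text \<open>A prime factor of \<open>Q m\<close> is homogeneous, so modulo \<open>w3\<close> it is zero or a non-unit.\<close>

lemma Q_no_common_prime:
  assumes "prime_elem pp" "pp dvd Q m" "pp dvd Q (Suc m)"
  shows False
proof -
  obtain e where e: "whomog (int e) pp"
    using whomog_dvd[OF whomog_Q Q_neq_0 assms(2)] by blast
  have dvd: "mod_w3 pp dvd mod_w3 (Q m)" "mod_w3 pp dvd mod_w3 (Q (Suc m))"
    using assms(2,3) by (auto elim!: dvdE)
  consider "mod_w3 pp = 0" | "is_unit (mod_w3 pp)" | "mod_w3 pp \<noteq> 0" "\<not> is_unit (mod_w3 pp)"
    by blast
  then show False
  proof cases
    case 1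
    then have "w3 dvd Q m" using assms(2) w3_dvd_iff by (metis dvd_trans)
    then show False using mod_w3_Q_neq_0 w3_dvd_iff by blast
  next
    case 2
    then have "pp = 1" by (rule whomog_eq_1_if_unit_mod_w3[OF e])
    then show False using assms(1) prime_elem_not_unit by auto
  next
    case 3
    then obtain pp' where "prime pp'" "pp' dvd mod_w3 pp" by (metis prime_divisorE)
    then show False
      using mod_w3_Q_no_common_prime[of pp' m] dvd by (meson dvd_trans prime_imp_prime_elem)
  qed
qed

lemma coprime_Q: "coprime (Q m) (Q (Suc m))"
  using is_unit_gcdI Q_neq_0 Q_no_common_prime prime_imp_prime_elem
  by (metis gcd_eq_0_iff is_unit_gcd)

lemma mod_w3_q_even: "mod_w3 (q (2*k)) = [:0, 1:] ^ k"
proof (induction k)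
  case (Suc k)
  have "mod_w3 (q (Suc (Suc m))) = [:0, 1:] * mod_w3 (q m)" for m
    by (cases m) (simp_all add: mod_w3_w2)
  with Suc show ?case by (simp add: numeral_2_eq_2)
qed simp

lemma q_even_neq_0: "q (2*k) \<noteq> 0"
  using mod_w3_q_even[of k] by auto

lemma q_neq_0_or_Suc: "q k \<noteq> 0 \<or> q (Suc k) \<noteq> 0"
  by (metis dvd_def even_Suc q_even_neq_0)

lemma q_no_common_prime:
  "prime_elem pp \<Longrightarrow> pp dvd q k \<Longrightarrow> pp dvd q (Suc k) \<Longrightarrow> pp dvd q (Suc (Suc k)) \<Longrightarrow> False"
proof (induction k)
  case 0
  then show ?case using prime_elem_not_unit by auto
next
  case (Suc k)
  from Suc.prems(2,4) have "pp dvd w3 * q k"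
    by (simp add: dvd_add_right_iff)
  with Suc.prems(1) consider "pp dvd w3" | "pp dvd q k"
    using prime_elem_dvd_mult_iff by blast
  then show False
  proof cases
    case 1
    then have "mod_w3 (q (Suc k)) = 0" "mod_w3 (q (Suc (Suc k))) = 0"
      using prime_factor_of_X[OF Suc.prems(1)] Suc.prems(2,3) by (simp_all add: w3_eq_X mod_w3_def)
    then show False
      by (metis dvd_def even_Suc mod_w3_q_even power_not_zero pCons_eq_0_iff zero_neq_one)
  qed (use Suc in blast)
qed

lemma is_unit_gcd_q3: "is_unit (gcd (q k) (gcd (q (Suc k)) (q (Suc (Suc k)))))"
proof (rule is_unit_gcdI)
  show "gcd (q k) (gcd (q (Suc k)) (q (Suc (Suc k)))) \<noteq> 0"
    using q_neq_0_or_Suc[of k] by auto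
next
  fix p assume "prime p" "p dvd q k" "p dvd gcd (q (Suc k)) (q (Suc (Suc k)))"
  then show False using q_no_common_prime[of p k] by (simp add: prime_imp_prime_elem)
qed

section \<open>Syzygies\<close>

lemma koszul_syzygy:
  fixes g1 g2 g3 t1 t2 t3 :: "'a::{idom, semiring_gcd}"
  assumes "coprime g1 g2" "g2 \<noteq> 0"
    and regular: "\<And>f \<alpha> \<beta>. f * g3 = \<alpha> * g1 + \<beta> * g2 \<Longrightarrow> \<exists>x y. f = x * g1 + y * g2"
    and syz: "t1 * g1 + t2 * g2 + t3 * g3 = 0"
  shows "\<exists>c1 c2 c3. t1 = c2 * g3 - c3 * g2 \<and> t2 = c3 * g1 - c1 * g3 \<and> t3 = c1 * g2 - c2 * g1"
proof -
  have "t3 * g3 = (- t1) * g1 + (- t2) * g2"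
    using syz by (simp add: algebra_simps eq_neg_iff_add_eq_0)
  then obtain x y where t3: "t3 = x * g1 + y * g2"
    using regular by blast
  have "(t1 + x * g3) * g1 = - ((t2 + y * g3) * g2)"
    using syz unfolding t3 by (simp add: algebra_simps eq_neg_iff_add_eq_0)
  then have "g2 dvd (t1 + x * g3) * g1"
    by (metis dvd_minus_iff dvd_triv_right)
  then obtain z where z: "t1 + x * g3 = g2 * z"
    using assms(1) by (metis coprime_commute coprime_dvd_mult_left_iff dvdE)
  have "g2 * (t2 + y * g3 + z * g1) = 0"
    using syz z unfolding t3 by algebra
  with assms(2) have t2: "t2 + y * g3 + z * g1 = 0"
    by simp
  show ?thesis
  proof (intro exI conjI)
    show "t1 = (- x) * g3 - (- z) * g2" using z by algebra
    show "t2 = (- z) * g1 - y * g3" using t2 by algebra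
    show "t3 = y * g2 - (- x) * g1" using t3 by algebra
  qed
qed

text \<open>\<open>(Q m, Q (m+1), w3)\<close> and hence \<open>(Q m, Q (m+1), Q (m+2))\<close> is a regular sequence.\<close>

lemma w3_mult_in_Q_pair:
  assumes "w3 * f = x * Q m + y * Q (Suc m)"
  shows "\<exists>x' y'. f = x' * Q m + y' * Q (Suc m)"
proof -
  have "mod_w3 x * mod_w3 (Q m) = - (mod_w3 y * mod_w3 (Q (Suc m)))"
    using arg_cong[OF assms, of mod_w3] by (simp add: eq_neg_iff_add_eq_0)
  then have "mod_w3 (Q (Suc m)) dvd mod_w3 x * mod_w3 (Q m)"
    by simp
  then obtain s where s: "mod_w3 x = mod_w3 (Q (Suc m)) * s"
    using coprime_mod_w3_Q[of m] by (metis coprime_commute coprime_dvd_mult_left_iff dvdE)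
  have "mod_w3 (Q (Suc m)) * mod_w3 y = mod_w3 (Q (Suc m)) * (- (s * mod_w3 (Q m)))"
    using \<open>mod_w3 x * _ = _\<close> s by (simp add: algebra_simps)
  then have sy: "mod_w3 y = - (s * mod_w3 (Q m))"
    using mod_w3_Q_neq_0[of "Suc m"] mult_left_cancel by blast
  have "w3 dvd x - [:s:] * Q (Suc m)" "w3 dvd y + [:s:] * Q m"
    unfolding w3_dvd_iff using s sy by (simp_all add: algebra_simps)
  then obtain x' y' where "x = [:s:] * Q (Suc m) + w3 * x'" "y = w3 * y' - [:s:] * Q m"
    by (metis (no_types, lifting) add_diff_cancel_right' diff_add_cancel dvdE add.commute)
  then have "w3 * f = w3 * (x' * Q m + y' * Q (Suc m))"
    unfolding assms by algebra
  then show ?thesis using w3_neq_0 by auto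
qed

lemma Q_regular:
  "f * Q (Suc (Suc m)) = \<alpha> * Q m + \<beta> * Q (Suc m) \<Longrightarrow> \<exists>x y. f = x * Q m + y * Q (Suc m)"
proof (induction m arbitrary: f \<alpha> \<beta>)
  case 0
  then show ?case by (intro exI[of _ f] exI[of _ 0]) simp
next
  case (Suc m)
  have "w3 * (f * Q m) = (\<alpha> - f * w2) * Q (Suc m) + (\<beta> - f * w1) * Q (Suc (Suc m))"
    using Suc.prems unfolding Q_Suc_Suc_Suc by algebra
  then obtain x y where xy: "f * Q m = x * Q (Suc m) + y * Q (Suc (Suc m))"
    using w3_mult_in_Q_pair by blast
  then have "y * Q (Suc (Suc m)) = f * Q m + (- x) * Q (Suc m)"
    by (simp add: algebra_simps)
  then obtain x' y' where y: "y = x' * Q m + y' * Q (Suc m)"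
    using Suc.IH by blast
  have "(f - x' * Q (Suc (Suc m))) * Q m = (x + y' * Q (Suc (Suc m))) * Q (Suc m)"
    using xy y by (simp add: algebra_simps)
  then have "Q (Suc m) dvd (f - x' * Q (Suc (Suc m))) * Q m"
    by (metis dvd_triv_right)
  then obtain z where "f - x' * Q (Suc (Suc m)) = Q (Suc m) * z"
    using coprime_Q[of m] by (metis coprime_commute coprime_dvd_mult_left_iff dvdE)
  then have "f = z * Q (Suc m) + x' * Q (Suc (Suc m))"
    by (simp add: algebra_simps)
  then show ?case by blast
qed

lemma koszul_syzygy_Q:
  assumes "t1 * Q m + t2 * Q (Suc m) + t3 * Q (Suc (Suc m)) = 0"
  shows "\<exists>c1 c2 c3. t1 = c2 * Q (Suc (Suc m)) - c3 * Q (Suc m) \<and> t2 = c3 * Q m - c1 * Q (Suc (Suc m))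
    \<and> t3 = c1 * Q (Suc m) - c2 * Q m"
  by (rule koszul_syzygy[OF coprime_Q Q_neq_0 _ assms], rule Q_regular)

lemma cross_product_identities:
  fixes u1 u2 u3 v1 v2 v3 x y z w a d :: "'a::comm_ring_1"
  defines "G1 \<equiv> u2*v3 - u3*v2 + w*x" and "G2 \<equiv> u3*v1 - u1*v3 + w*y"
    and "G3 \<equiv> u1*v2 - u2*v1 + w*z"
  defines "A \<equiv> u1*x + u2*y + u3*z" and "D \<equiv> v1*x + v2*y + v3*z"
  shows "(a*u1 + d*v1)*G1 + (a*u2 + d*v2)*G2 + (a*u3 + d*v3)*G3 = w * (a*A + d*D)"
    and "v1*A - u1*D = G2*z - G3*y"
    and "v2*A - u2*D = G3*x - G1*z"
    and "v3*A - u3*D = G1*y - G2*x"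
  unfolding assms by (simp_all add: algebra_simps)

lemma syzygy_of_cross_product_first:
  fixes u1 u2 u3 v1 v2 v3 s1 s2 s3 :: "'a::factorial_ring_gcd"
  defines "D1 \<equiv> u2*v3 - u3*v2" and "D2 \<equiv> u3*v1 - u1*v3" and "D3 \<equiv> u1*v2 - u2*v1"
  assumes syz: "s1*D1 + s2*D2 + s3*D3 = 0" and unit: "is_unit (gcd D1 (gcd D2 D3))" and "D1 \<noteq> 0"
  shows "\<exists>a d. s1 = a*u1 + d*v1 \<and> s2 = a*u2 + d*v2 \<and> s3 = a*u3 + d*v3"
proof -
  have dvd_gcd: "D1 dvd y" if "D1 dvd D2 * y" "D1 dvd D3 * y" for y
  proof -
    have "D1 dvd gcd (D2 * y) (D3 * y)" using that by simp
    then have "D1 dvd gcd D3 D2 * y" by (simp add: gcd_mult_right)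
    moreover have "coprime D1 (gcd D3 D2)" using unit is_unit_gcd by (metis gcd.commute)
    ultimately show ?thesis using coprime_dvd_mult_right_iff by blast
  qed
  define a1 where "a1 = s2*v3 - s3*v2"
  define d1 where "d1 = u2*s3 - u3*s2"
  have "D2 * a1 = D1 * (s3*v1 - s1*v3)" "D3 * a1 = D1 * (s1*v2 - s2*v1)"
    using syz unfolding D1_def D2_def D3_def a1_def by algebra+
  then obtain a where a: "a1 = D1 * a" using dvd_gcd by (metis dvd_triv_left dvdE)
  have "D2 * d1 = D1 * (u3*s1 - u1*s3)" "D3 * d1 = D1 * (u1*s2 - u2*s1)"
    using syz unfolding D1_def D2_def D3_def d1_def by algebra+
  then obtain d where d: "d1 = D1 * d" using dvd_gcd by (metis dvd_triv_left dvdE)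
  have "D1*s1 = a1*u1 + d1*v1" "D1*s2 = a1*u2 + d1*v2" "D1*s3 = a1*u3 + d1*v3"
    using syz unfolding D1_def D2_def D3_def a1_def d1_def by algebra+
  then have "D1 * s1 = D1 * (a*u1 + d*v1)" "D1 * s2 = D1 * (a*u2 + d*v2)" "D1 * s3 = D1 * (a*u3 + d*v3)"
    unfolding a d by (simp_all add: algebra_simps)
  with \<open>D1 \<noteq> 0\<close> show ?thesis by auto
qed

text \<open>Hilbert--Burch for the \<open>2 \<times> 2\<close> minors of the matrix with rows \<open>u, v\<close>.\<close>

lemma syzygy_of_cross_product:
  fixes u1 u2 u3 v1 v2 v3 s1 s2 s3 :: "'a::factorial_ring_gcd"
  defines "D1 \<equiv> u2*v3 - u3*v2" and "D2 \<equiv> u3*v1 - u1*v3" and "D3 \<equiv> u1*v2 - u2*v1"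
  assumes syz: "s1*D1 + s2*D2 + s3*D3 = 0" and unit: "is_unit (gcd D1 (gcd D2 D3))"
    and nz: "D1 \<noteq> 0 \<or> D2 \<noteq> 0 \<or> D3 \<noteq> 0"
  shows "\<exists>a d. s1 = a*u1 + d*v1 \<and> s2 = a*u2 + d*v2 \<and> s3 = a*u3 + d*v3"
proof -
  have units: "is_unit (gcd D2 (gcd D3 D1))" "is_unit (gcd D3 (gcd D1 D2))"
    using unit by (simp_all add: ac_simps)
  from nz consider "D1 \<noteq> 0" | "D2 \<noteq> 0" | "D3 \<noteq> 0" by blast
  then show ?thesis
  proof cases
    case 1
    then show ?thesis using syzygy_of_cross_product_first[of s1 u2 v3 u3 v2 s2 v1 u1 s3] syz unit
      unfolding D1_def D2_def D3_def by blast
  next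
    case 2
    then show ?thesis using syzygy_of_cross_product_first[of s2 u3 v1 u1 v3 s3 v2 u2 s1] syz units(1)
      unfolding D1_def D2_def D3_def by (auto simp: ac_simps)
  next
    case 3
    then show ?thesis using syzygy_of_cross_product_first[of s3 u1 v2 u2 v1 s1 v3 u3 s2] syz units(2)
      unfolding D1_def D2_def D3_def by (auto simp: ac_simps)
  qed
qed

lemma cross_cross_coefficients:
  fixes u1 u2 u3 v1 v2 v3 a d c1 c2 c3 :: "'a::idom"
  defines "D1 \<equiv> u2*v3 - u3*v2" and "D2 \<equiv> u3*v1 - u1*v3" and "D3 \<equiv> u1*v2 - u2*v1"
  assumes "a*u1 + d*v1 = c2*D3 - c3*D2" "a*u2 + d*v2 = c3*D1 - c1*D3" "a*u3 + d*v3 = c1*D2 - c2*D1"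
    and nz: "D1 \<noteq> 0 \<or> D2 \<noteq> 0 \<or> D3 \<noteq> 0"
  shows "a = c1*v1 + c2*v2 + c3*v3" and "d = - (c1*u1 + c2*u2 + c3*u3)"
proof -
  define X where "X = a - (c1*v1 + c2*v2 + c3*v3)"
  define Y where "Y = d + (c1*u1 + c2*u2 + c3*u3)"
  have "X*u1 + Y*v1 = 0" "X*u2 + Y*v2 = 0" "X*u3 + Y*v3 = 0"
    using assms(4-6) unfolding X_def Y_def D1_def D2_def D3_def by algebra+
  then have "X*D1 = 0" "X*D2 = 0" "X*D3 = 0" "Y*D1 = 0" "Y*D2 = 0" "Y*D3 = 0"
    unfolding D1_def D2_def D3_def by algebra+
  with nz have "X = 0" "Y = 0" by auto
  then show "a = c1*v1 + c2*v2 + c3*v3" "d = - (c1*u1 + c2*u2 + c3*u3)"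
    unfolding X_def Y_def by (simp, metis eq_neg_iff_add_eq_0)
qed

section \<open>The kernel of multiplication by w1\<close>

lemma Iid_iff: "x \<in> Iid n \<longleftrightarrow> (\<exists>a b c. x = a * Q (n-2) + b * Q (n-1) + c * Q n)"
  by (auto simp: Iid_def)

lemma lincomb_in_Iid: "a * Q (n-2) + b * Q (n-1) + c * Q n \<in> Iid n"
  by (auto simp: Iid_def)

lemma Iid_add:
  assumes "x \<in> Iid n" "y \<in> Iid n" shows "x + y \<in> Iid n"
proof -
  obtain a b c a' b' c' where "x = a * Q (n-2) + b * Q (n-1) + c * Q n"
    "y = a' * Q (n-2) + b' * Q (n-1) + c' * Q n"
    using assms by (auto simp: Iid_iff)
  then have "x + y = (a + a') * Q (n-2) + (b + b') * Q (n-1) + (c + c') * Q n"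
    by (simp add: algebra_simps)
  then show ?thesis by (simp only: lincomb_in_Iid)
qed

lemma Iid_mult:
  assumes "x \<in> Iid n" shows "z * x \<in> Iid n"
proof -
  obtain a b c where "x = a * Q (n-2) + b * Q (n-1) + c * Q n"
    using assms by (auto simp: Iid_iff)
  then have "z * x = (z * a) * Q (n-2) + (z * b) * Q (n-1) + (z * c) * Q n"
    by (simp add: algebra_simps)
  then show ?thesis by (simp only: lincomb_in_Iid)
qed

lemma Jid_times_kernel: assumes "y \<in> Jid n" "w1 * X \<in> Iid n" shows "y * X \<in> Iid n"
proof -
  obtain e0 e1 e2 where y: "y = e0 * q (n-2) + e1 * q (n-1) + e2 * q n"
    using assms(1) by (auto simp: Jid_def)
  have "y * X = ((e0 * X) * Q (n-2) + (e1 * X) * Q (n-1) + (e2 * X) * Q n)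
     + (e0 * p (n-2) + e1 * p (n-1) + e2 * p n) * (w1 * X)"
    unfolding y Q_eq_q_plus_w1_p by (simp add: algebra_simps)
  then show ?thesis using Iid_add[OF lincomb_in_Iid Iid_mult[OF assms(2)]] by simp
qed

lemma zero_in_Jid: "0 \<in> Jid n"
  unfolding Jid_def by (intro CollectI exI[of _ 0]) (simp add: inW2_def)

text \<open>An arbitrary factorisation of \<open>(q (n-2), q (n-1), q n)\<close> as a cross product \<open>u \<times> v\<close> of
  vectors over \<open>W2\<close>; in characteristic two the signs are immaterial.\<close>

locale cross_factorization =
  fixes n :: nat and u1 u2 u3 v1 v2 v3 :: W
  assumes n_ge_2: "2 \<le> n"
    and inW2_uv: "inW2 u1" "inW2 u2" "inW2 u3" "inW2 v1" "inW2 v2" "inW2 v3"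
    and q_cross: "q (n-2) = u2*v3 - u3*v2" "q (n-1) = u3*v1 - u1*v3" "q n = u1*v2 - u2*v1"
begin

definition A :: W where "A = u1 * p (n-2) + u2 * p (n-1) + u3 * p n"

definition D :: W where "D = v1 * p (n-2) + v2 * p (n-1) + v3 * p n"

lemma mod_w1_uv [simp]:
  "mod_w1 u1 = u1" "mod_w1 u2 = u2" "mod_w1 u3 = u3" "mod_w1 v1 = v1" "mod_w1 v2 = v2" "mod_w1 v3 = v3"
  using inW2_uv by (simp_all add: inW2_iff_mod_w1)

lemma Q_cross:
  "Q (n-2) = u2*v3 - u3*v2 + w1 * p (n-2)" "Q (n-1) = u3*v1 - u1*v3 + w1 * p (n-1)"
  "Q n = u1*v2 - u2*v1 + w1 * p n"
  using Q_eq_q_plus_w1_p q_cross by simp_all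

lemma Suc_indices: "Suc (n-2) = n-1" "Suc (n-1) = n"
  using n_ge_2 by simp_all

lemma uv_combination_Q:
  "(a*u1 + d*v1) * Q (n-2) + (a*u2 + d*v2) * Q (n-1) + (a*u3 + d*v3) * Q n = w1 * (a*A + d*D)"
  unfolding Q_cross A_def D_def by (rule cross_product_identities)

lemma w1_A_in_Iid: "w1 * A \<in> Iid n"
proof -
  have "w1 * A = u1 * Q (n-2) + u2 * Q (n-1) + u3 * Q n" using uv_combination_Q[of 1 0] by simp
  then show ?thesis by (simp only: lincomb_in_Iid)
qed

lemma w1_D_in_Iid: "w1 * D \<in> Iid n"
proof -
  have "w1 * D = v1 * Q (n-2) + v2 * Q (n-1) + v3 * Q n" using uv_combination_Q[of 0 1] by simp
  then show ?thesis by (simp only: lincomb_in_Iid)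
qed

lemma relations_in_Iid: "v1*A - u1*D \<in> Iid n" "v2*A - u2*D \<in> Iid n" "v3*A - u3*D \<in> Iid n"
proof -
  have "v1*A - u1*D = Q (n-1) * p n - Q n * p (n-1)"
    "v2*A - u2*D = Q n * p (n-2) - Q (n-2) * p n"
    "v3*A - u3*D = Q (n-2) * p (n-1) - Q (n-1) * p (n-2)"
    unfolding A_def D_def Q_cross by (rule cross_product_identities(2-4))+
  moreover have "Q (n-1) * p n - Q n * p (n-1) = 0 * Q (n-2) + p n * Q (n-1) + (- p (n-1)) * Q n"
    "Q n * p (n-2) - Q (n-2) * p n = (- p n) * Q (n-2) + 0 * Q (n-1) + p (n-2) * Q n"
    "Q (n-2) * p (n-1) - Q (n-1) * p (n-2) = p (n-1) * Q (n-2) + (- p (n-2)) * Q (n-1) + 0 * Q n"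
    by (simp_all add: algebra_simps)
  ultimately show "v1*A - u1*D \<in> Iid n" "v2*A - u2*D \<in> Iid n" "v3*A - u3*D \<in> Iid n"
    by (simp_all only: lincomb_in_Iid)
qed

lemma is_unit_gcd_cross: "is_unit (gcd (u2*v3 - u3*v2) (gcd (u3*v1 - u1*v3) (u1*v2 - u2*v1)))"
  using is_unit_gcd_q3[of "n-2"] unfolding Suc_indices q_cross .

lemma cross_neq_0: "u2*v3 - u3*v2 \<noteq> 0 \<or> u3*v1 - u1*v3 \<noteq> 0 \<or> u1*v2 - u2*v1 \<noteq> 0"
  using q_neq_0_or_Suc[of "n-2"] unfolding Suc_indices q_cross by auto

lemma kernel_generated_by_A_D:
  assumes "w1 * x \<in> Iid n"
  shows "\<exists>a d. inW2 a \<and> inW2 d \<and> x - (a*A + d*D) \<in> Iid n"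
proof -
  obtain \<alpha> \<beta> \<gamma> where x: "w1 * x = \<alpha> * Q (n-2) + \<beta> * Q (n-1) + \<gamma> * Q n"
    using assms by (auto simp: Iid_iff)
  have "mod_w1 \<alpha> * (u2*v3 - u3*v2) + mod_w1 \<beta> * (u3*v1 - u1*v3) + mod_w1 \<gamma> * (u1*v2 - u2*v1) = 0"
    using arg_cong[OF x, of mod_w1]
    unfolding mod_w1_add mod_w1_mult mod_w1_Q mod_w1_w1 q_cross by simp
  then obtain a0 d0 where "mod_w1 \<alpha> = a0*u1 + d0*v1" "mod_w1 \<beta> = a0*u2 + d0*v2"
      "mod_w1 \<gamma> = a0*u3 + d0*v3"
    using syzygy_of_cross_product[OF _ is_unit_gcd_cross cross_neq_0] by blast
  then have coeffs: "mod_w1 \<alpha> = mod_w1 a0*u1 + mod_w1 d0*v1" "mod_w1 \<beta> = mod_w1 a0*u2 + mod_w1 d0*v2"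
      "mod_w1 \<gamma> = mod_w1 a0*u3 + mod_w1 d0*v3"
    by (metis mod_w1_idem mod_w1_add mod_w1_mult mod_w1_uv)+
  define R where "R = div_w1 \<alpha> * Q (n-2) + div_w1 \<beta> * Q (n-1) + div_w1 \<gamma> * Q n"
  have "w1 * x = (mod_w1 \<alpha> + w1 * div_w1 \<alpha>) * Q (n-2) + (mod_w1 \<beta> + w1 * div_w1 \<beta>) * Q (n-1)
      + (mod_w1 \<gamma> + w1 * div_w1 \<gamma>) * Q n"
    unfolding mod_w1_div_w1 by (rule x)
  also have "\<dots> = (mod_w1 \<alpha> * Q (n-2) + mod_w1 \<beta> * Q (n-1) + mod_w1 \<gamma> * Q n) + w1 * R"
    unfolding R_def by (simp only: distrib_right distrib_left mult.assoc add_ac)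
  also have "\<dots> = w1 * (mod_w1 a0 * A + mod_w1 d0 * D + R)"
    unfolding coeffs uv_combination_Q by (simp only: distrib_left)
  finally have "x - (mod_w1 a0 * A + mod_w1 d0 * D) = R"
    using w1_neq_0 by simp
  then show ?thesis
    unfolding R_def by (metis lincomb_in_Iid inW2_mod_w1)
qed

lemma relation_coefficients:
  assumes "inW2 a" "inW2 d" "a*A + d*D \<in> Iid n"
  shows "\<exists>c1 c2 c3. inW2 c1 \<and> inW2 c2 \<and> inW2 c3
    \<and> a = c1*v1 + c2*v2 + c3*v3 \<and> d = c1*u1 + c2*u2 + c3*u3"
proof -
  obtain \<iota>1 \<iota>2 \<iota>3 where \<iota>: "a*A + d*D = \<iota>1 * Q (n-2) + \<iota>2 * Q (n-1) + \<iota>3 * Q n"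
    using assms(3) by (auto simp: Iid_iff)
  have "(a*u1 + d*v1 - w1*\<iota>1) * Q (n-2) + (a*u2 + d*v2 - w1*\<iota>2) * Q (n-1)
      + (a*u3 + d*v3 - w1*\<iota>3) * Q n = 0"
    using uv_combination_Q[of a d] \<iota> by algebra
  then obtain c1 c2 c3 where c:
      "a*u1 + d*v1 - w1*\<iota>1 = c2 * Q n - c3 * Q (n-1)"
      "a*u2 + d*v2 - w1*\<iota>2 = c3 * Q (n-2) - c1 * Q n"
      "a*u3 + d*v3 - w1*\<iota>3 = c1 * Q (n-1) - c2 * Q (n-2)"
    using koszul_syzygy_Q[of _ "n-2", unfolded Suc_indices] by blast
  have ad: "mod_w1 a = a" "mod_w1 d = d"
    using assms(1,2) inW2_iff_mod_w1 by blast+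
  have "a*u1 + d*v1 = mod_w1 c2 * (u1*v2 - u2*v1) - mod_w1 c3 * (u3*v1 - u1*v3)"
    "a*u2 + d*v2 = mod_w1 c3 * (u2*v3 - u3*v2) - mod_w1 c1 * (u1*v2 - u2*v1)"
    "a*u3 + d*v3 = mod_w1 c1 * (u3*v1 - u1*v3) - mod_w1 c2 * (u2*v3 - u3*v2)"
    using c[THEN arg_cong[of _ _ mod_w1]]
    unfolding mod_w1_diff mod_w1_add mod_w1_mult mod_w1_Q mod_w1_w1 mod_w1_uv ad q_cross
    by simp_all
  note coeffs = cross_cross_coefficients[OF this cross_neq_0]
  show ?thesis
  proof (intro exI conjI)
    show "a = mod_w1 c1*v1 + mod_w1 c2*v2 + mod_w1 c3*v3" by (rule coeffs(1))
    show "d = mod_w1 c1*u1 + mod_w1 c2*u2 + mod_w1 c3*u3" using coeffs(2) by (simp only: minus_W)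
  qed (rule inW2_mod_w1)+
qed

lemma relation_from_coefficients:
  assumes "a - (c1*v1 + c2*v2 + c3*v3) \<in> Jid n" "d - (c1*u1 + c2*u2 + c3*u3) \<in> Jid n"
  shows "a*A + d*D \<in> Iid n"
proof -
  have "(c1 * (v1*A - u1*D) + c2 * (v2*A - u2*D) + c3 * (v3*A - u3*D))
      = (c1*v1 + c2*v2 + c3*v3) * A - (c1*u1 + c2*u2 + c3*u3) * D"
    by (simp add: algebra_simps)
  moreover have "a*A + d*D = (S*A - T*D) + ((a - S) * A + (d + T) * D)" for S T
    by (simp add: algebra_simps)
  ultimately have "a*A + d*D = (c1 * (v1*A - u1*D) + c2 * (v2*A - u2*D) + c3 * (v3*A - u3*D))
      + ((a - (c1*v1 + c2*v2 + c3*v3)) * A + (d - (c1*u1 + c2*u2 + c3*u3)) * D)"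
    by (simp only: diff_W[of d])
  moreover have "c1 * (v1*A - u1*D) + c2 * (v2*A - u2*D) + c3 * (v3*A - u3*D) \<in> Iid n"
    using relations_in_Iid by (intro Iid_add Iid_mult)
  moreover have "(a - (c1*v1 + c2*v2 + c3*v3)) * A + (d - (c1*u1 + c2*u2 + c3*u3)) * D \<in> Iid n"
    by (rule Iid_add[OF Jid_times_kernel[OF assms(1) w1_A_in_Iid] Jid_times_kernel[OF assms(2) w1_D_in_Iid]])
  ultimately show ?thesis
    by (simp add: Iid_add)
qed

lemma relations_AD_iff:
  assumes "inW2 a" "inW2 d"
  shows "a*A + d*D \<in> Iid n \<longleftrightarrow>
    (\<exists>c1 c2 c3. inW2 c1 \<and> inW2 c2 \<and> inW2 c3
       \<and> a - (c1*v1 + c2*v2 + c3*v3) \<in> Jid n \<and> d - (c1*u1 + c2*u2 + c3*u3) \<in> Jid n)"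
proof
  assume "a*A + d*D \<in> Iid n"
  then obtain c1 c2 c3 where "inW2 c1" "inW2 c2" "inW2 c3"
    "a - (c1*v1 + c2*v2 + c3*v3) = 0" "d - (c1*u1 + c2*u2 + c3*u3) = 0"
    using relation_coefficients[OF assms] by auto
  then show "\<exists>c1 c2 c3. inW2 c1 \<and> inW2 c2 \<and> inW2 c3
       \<and> a - (c1*v1 + c2*v2 + c3*v3) \<in> Jid n \<and> d - (c1*u1 + c2*u2 + c3*u3) \<in> Jid n"
    using zero_in_Jid by metis
next
  assume "\<exists>c1 c2 c3. inW2 c1 \<and> inW2 c2 \<and> inW2 c3
       \<and> a - (c1*v1 + c2*v2 + c3*v3) \<in> Jid n \<and> d - (c1*u1 + c2*u2 + c3*u3) \<in> Jid n"
  then show "a*A + d*D \<in> Iid n"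
    using relation_from_coefficients by blast
qed

end

lemma whomog_p_combination:
  assumes "2 \<le> n" "whomog e x1" "whomog (e - 1) x2" "whomog (e - 2) x3"
  shows "whomog (e + int n - 3) (x1 * p (n-2) + x2 * p (n-1) + x3 * p n)"
  using assms
  by (intro whomog_add whomog_mult[OF assms(2) whomog_p] whomog_mult[OF assms(3) whomog_p]
      whomog_mult[OF assms(4) whomog_p]) auto

lemma whomog_r_triple:
  assumes "2 \<le> j"
  shows "whomog (2 * int j) (r j)" "whomog (2 * int j - 1) (w3 * r (j-2))"
    "whomog (2 * int j - 2) (r (j-1))"
proof -
  show "whomog (2 * int j) (r j)" by (rule whomog_r)
  show "whomog (2 * int j - 1) (w3 * r (j-2))"
    using assms by (intro whomog_mult[OF whomog_w3 whomog_r]) simp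
  show "whomog (2 * int j - 2) (r (j-1))"
    using whomog_r[of "j-1"] assms by (simp add: of_nat_diff algebra_simps)
qed

lemma whomog_q_triple:
  assumes "1 \<le> i"
  shows "whomog (int i + 2) (w3 * q (i-1))" "whomog (int i + 1) (q (i+1))" "whomog (int i) (q i)"
proof -
  show "whomog (int i + 2) (w3 * q (i-1))"
    using assms by (intro whomog_mult[OF whomog_w3 whomog_q]) simp
  show "whomog (int i + 1) (q (i+1))"
    using whomog_q[of "i+1"] by (simp add: add.commute)
  show "whomog (int i) (q i)" by (rule whomog_q)
qed

lemma indices_between_powers_of_two:
  fixes n t :: nat
  assumes "2^(t-1) < n" "n \<le> 2^t - 4"
  shows "1 \<le> t - 1" "(2::nat)^t = 2 * 2^(t-1)" "1 \<le> 2^t - 3 - n" "2 \<le> n - 2^(t-1) + 1"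
    "(2^t - 3 - n) + (n - 2^(t-1) + 1) + 2 = 2^(t-1)" "n = 2^(t-1) + (n - 2^(t-1) + 1) - 1"
proof -
  have "2 \<le> t" using assms by (cases t; cases "t - 1") auto
  then have "(2::nat)^t = 2 * 2^(t-1)" by (simp flip: power_Suc)
  with assms \<open>2 \<le> t\<close> show "1 \<le> t - 1" "(2::nat)^t = 2 * 2^(t-1)" "1 \<le> 2^t - 3 - n"
    "2 \<le> n - 2^(t-1) + 1" "(2^t - 3 - n) + (n - 2^(t-1) + 1) + 2 = 2^(t-1)"
    "n = 2^(t-1) + (n - 2^(t-1) + 1) - 1"
    by auto
qed

theorem mainTheorem18:
  fixes n t :: nat
  assumes "2^(t-1) < n" and "n \<le> 2^t - 4"
  defines "i \<equiv> 2^t - 3 - n" and "j \<equiv> n - 2^(t-1) + 1"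
  defines "Dn \<equiv> q i * p n + q (i+1) * p (n-1) + w3 * q (i-1) * p (n-2)"
      and "An \<equiv> r (j-1) * p n + w3 * r (j-2) * p (n-1) + r j * p (n-2)"
  defines "degA \<equiv> 3 * int n - 2^t - 1" and "degD \<equiv> (2::int)^t - 4"
  shows "w1 * An \<in> Iid n \<and> w1 * Dn \<in> Iid n
    \<and> whomog degA An \<and> whomog degD Dn
    \<and> (\<forall>x. w1 * x \<in> Iid n \<longrightarrow>
          (\<exists>a d. inW2 a \<and> inW2 d \<and> x - (a * An + d * Dn) \<in> Iid n))
    \<and> (\<forall>a d. inW2 a \<and> inW2 d \<longrightarrow>
          (a * An + d * Dn \<in> Iid n \<longleftrightarrow>
            (\<exists>c1 c2 c3. inW2 c1 \<and> inW2 c2 \<and> inW2 c3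
               \<and> a - (c1 * q i + c2 * q (i+1) + c3 * (w3 * q (i-1))) \<in> Jid n
               \<and> d - (c1 * r (j-1) + c2 * (w3 * r (j-2)) + c3 * r j) \<in> Jid n)))
    \<and> whomog (2 * int n - 4 - degA) (q i) \<and> whomog (2 * int n - 4 - degD) (r (j-1))
    \<and> whomog (2 * int n - 3 - degA) (q (i+1)) \<and> whomog (2 * int n - 3 - degD) (w3 * r (j-2))
    \<and> whomog (2 * int n - 2 - degA) (w3 * q (i-1)) \<and> whomog (2 * int n - 2 - degD) (r j)"
proof -
  define N where "N = (2::nat) ^ (t-1)"
  note idx = indices_between_powers_of_two[OF assms(1,2), folded N_def i_def j_def]
  have pow: "(2::int)^t = 2 * int N" "qz (int N - 3) = 0"
    using idx(1) qz_pow2_minus_3[OF idx(1)] unfolding N_def by (cases t, simp_all)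
  have n_idx: "n - 2 = N + j - 3" "n - 1 = N + j - 2" "2 \<le> n"
    using idx by auto
  interpret K: cross_factorization n "r j" "w3 * r (j-2)" "r (j-1)" "w3 * q (i-1)" "q (i+1)" "q i"
    using q_cross_factorization[OF pow(2) idx(3-5)] n_idx idx(6)
    by unfold_locales (simp_all add: inW2_mult inW2_q inW2_r inW2_w3)
  have AD: "An = K.A" "Dn = K.D"
    unfolding An_def Dn_def K.A_def K.D_def by (simp_all add: ac_simps)
  have deg: "degA = 2 * int j + int n - 3" "degD = int i + 2 + int n - 3"
    using idx pow(1) unfolding degA_def degD_def by simp_all
  have degs: "2 * int n - 4 - degA = int i" "2 * int n - 4 - degD = 2 * int j - 2"
      "2 * int n - 3 - degA = int i + 1" "2 * int n - 3 - degD = 2 * int j - 1"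
      "2 * int n - 2 - degA = int i + 2" "2 * int n - 2 - degD = 2 * int j"
    using idx unfolding deg by auto
  have "whomog degA An"
    unfolding deg AD K.A_def
    by (rule whomog_p_combination[OF n_idx(3)]) (use whomog_r_triple[OF idx(4)] in simp_all)
  moreover have "whomog degD Dn"
    unfolding deg AD K.D_def
    by (rule whomog_p_combination[OF n_idx(3)])
      (use whomog_q_triple[OF idx(3)] in \<open>simp_all add: ac_simps\<close>)
  moreover have "(\<exists>c1 c2 c3. inW2 c1 \<and> inW2 c2 \<and> inW2 c3
               \<and> a - (c1 * q i + c2 * q (i+1) + c3 * (w3 * q (i-1))) \<in> Jid n
               \<and> d - (c1 * r (j-1) + c2 * (w3 * r (j-2)) + c3 * r j) \<in> Jid n)
      \<longleftrightarrow> a * An + d * Dn \<in> Iid n" if "inW2 a" "inW2 d" for a d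
    unfolding AD K.relations_AD_iff[OF that] by (auto simp: ac_simps)
  ultimately show ?thesis
    using whomog_r_triple[OF idx(4)] whomog_q_triple[OF idx(3)]
      K.w1_A_in_Iid K.w1_D_in_Iid K.kernel_generated_by_A_D unfolding AD[symmetric] degs by blast
qed

end
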